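(* Let $n\ge 3$. The map $\phi_n:|\mathcal K_n|\to\partial(Root_n)$ is injective. Equivalently, if $\mathcal T_1,\mathcal T_2$ are nonempty admissible families and there exist positive reals $\{\alpha_{ij}\}_{[i,j)\in\mathcal T_1}$, $\{\beta_{ij}\}_{[i,j)\in\mathcal T_2}$ with $\sum\alpha_{ij}=1=\sum\beta_{ij}$ and $\sum_{[i,j)\in\mathcal T_1}\alpha_{ij}(e_i-e_j)=\sum_{[i,j)\in\mathcal T_2}\beta_{ij}(e_i-e_j)$, then $\mathcal T_1=\mathcal T_2$ and $\alpha_{ij}=\beta_{ij}$ for all $[i,j)\in\mathcal T_1$.
   Context: Identify $[n]$ with the vertices of a regular $n$-gon in $S^1$, labelled counterclockwise, with counterclockwise order $\preceq$; for $a\ne b\in[n]$, $[a,b)=\{z\in S^1:a\preceq z\prec b\}$. A finite collection of such arcs is admissible if any two distinct members $I,J$ are either intersecting and strictly nested, or disjoint with the sink of neither equal to the source of the other. $\mathcal K_n$ is the simplicial complex on the arcs $[i,j)$, $i\neq j$, whose simplices are the nonempty admissible families. $Root_n=\mathrm{Conv}\{e_i-e_j:i\ne j\}$ and $\phi_n$ is affine on each simplex of $\mathcal K_n$ with $\phi_n([i,j))=e_i-e_j$. *)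

theory Defs
  imports Complex_Main
begin

text \<open>The circle S^1 is modelled as the interval [0,n) of reals (reals mod n),
  with vertex k of the regular n-gon (k = 0,...,n-1, labelled counterclockwise)
  at position k. Counterclockwise order starting at a is measured by the
  residue of (z - a) modulo n.\<close>

definition circ_mod :: "nat \<Rightarrow> real \<Rightarrow> real" where
  "circ_mod n y = y - real n * of_int \<lfloor>y / real n\<rfloor>"

text \<open>An arc [a,b) is encoded by the pair (a,b) (source a, sink b);
  its point set is the half-open counterclockwise arc from a to b.\<close>

definition arc_set :: "nat \<Rightarrow> nat \<times> nat \<Rightarrow> real set" where
  "arc_set n I = {z. 0 \<le> z \<and> z < real n \<and>
      circ_mod n (z - real (fst I)) < circ_mod n (real (snd I) - real (fst I))}"

definition is_arc :: "nat \<Rightarrow> nat \<times> nat \<Rightarrow> bool" where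
  "is_arc n I \<longleftrightarrow> fst I < n \<and> snd I < n \<and> fst I \<noteq> snd I"

definition compatible_arcs :: "nat \<Rightarrow> nat \<times> nat \<Rightarrow> nat \<times> nat \<Rightarrow> bool" where
  "compatible_arcs n I J \<longleftrightarrow>
     (arc_set n I \<inter> arc_set n J \<noteq> {} \<and>
        (arc_set n I \<subset> arc_set n J \<or> arc_set n J \<subset> arc_set n I))
   \<or> (arc_set n I \<inter> arc_set n J = {} \<and> snd I \<noteq> fst J \<and> snd J \<noteq> fst I)"

text \<open>Admissible families = simplices of K_n: nonempty finite families of arcs,
  pairwise compatible.\<close>

definition admissible :: "nat \<Rightarrow> (nat \<times> nat) set \<Rightarrow> bool" where
  "admissible n T \<longleftrightarrow> finite T \<and> T \<noteq> {} \<and> (\<forall>I\<in>T. is_arc n I) \<and>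
     (\<forall>I\<in>T. \<forall>J\<in>T. I \<noteq> J \<longrightarrow> compatible_arcs n I J)"

definition unit_vec :: "nat \<Rightarrow> nat \<Rightarrow> real" where
  "unit_vec i = (\<lambda>k. if k = i then 1 else 0)"

definition root_comb :: "(nat \<times> nat) set \<Rightarrow> (nat \<times> nat \<Rightarrow> real) \<Rightarrow> nat \<Rightarrow> real" where
  "root_comb T \<alpha> = (\<lambda>k. \<Sum>I\<in>T. \<alpha> I * (unit_vec (fst I) k - unit_vec (snd I) k))"

end

theory Submission
  imports Defs
begin

text \<open>Read an arc [a,b) as the set of polygon vertices it contains, and let the coverage
  c(k) of a weighted family be the total weight of its arcs containing vertex k. The k-th
  coordinate of the root combination is c(k) - c(k-1) (indices mod n), so two families with
  the same image have coverage functions differing by a constant. The vertices flanking a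
  longest arc of an admissible family lie in no arc of it, so both coverages vanish somewhere
  and the constant is 0. Equal coverage determines the weighted family: a longest arc M of
  T1 \<union> T2 leaves its flanks uncovered in its own family, hence in the other one, where every
  arc meeting M must then lie inside M; if M were missing there, proper subarcs could not
  cover all of M. So M lies in both families, and comparing coverages at a vertex of M
  covered by no other arc of the family gives equal weights. Removing M and inducting
  finishes the proof.\<close>

context
  fixes n :: nat
begin

definition prev_vertex :: "nat \<Rightarrow> nat" where
  "prev_vertex k = (if k = 0 then n - 1 else k - 1)"

definition arc_vertices :: "nat \<times> nat \<Rightarrow> nat set" where
  "arc_vertices I =
     (if fst I < snd I then {fst I..<snd I} else {fst I..<n} \<union> {..<snd I})"

lemma prev_vertex_less: "k < n \<Longrightarrow> prev_vertex k < n"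
  by (auto simp: prev_vertex_def)

lemma prev_vertex_invariant_const:
  assumes "\<forall>k<n. D k = D (prev_vertex k)" "k < n"
  shows "D k = D 0"
  using assms(2)
proof (induction k)
  case (Suc k)
  then show ?case using assms(1) by (metis Suc_lessD diff_Suc_1 nat.distinct(1) prev_vertex_def)
qed simp

lemma arc_vertices_subset: "is_arc n I \<Longrightarrow> arc_vertices I \<subseteq> {..<n}"
  by (auto simp: arc_vertices_def is_arc_def)

lemma arc_source_iff:
  assumes "is_arc n I" "k < n"
  shows "k \<in> arc_vertices I \<and> prev_vertex k \<notin> arc_vertices I \<longleftrightarrow> k = fst I"
  using assms by (auto simp: arc_vertices_def prev_vertex_def is_arc_def)

lemma arc_sink_iff:
  assumes "is_arc n I" "k < n"
  shows "k \<notin> arc_vertices I \<and> prev_vertex k \<in> arc_vertices I \<longleftrightarrow> k = snd I"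
  using assms by (auto simp: arc_vertices_def prev_vertex_def is_arc_def)

lemma arc_vertices_inj:
  assumes "is_arc n I" "is_arc n J" "arc_vertices I = arc_vertices J"
  shows "I = J"
proof -
  have "fst I < n" "snd I < n" using assms(1) by (auto simp: is_arc_def)
  then have "fst I = fst J" "snd I = snd J"
    using arc_source_iff[OF assms(1)] arc_source_iff[OF assms(2)]
      arc_sink_iff[OF assms(1)] arc_sink_iff[OF assms(2)] assms(3) by metis+
  then show ?thesis by (simp add: prod_eq_iff)
qed

lemma arc_vertices_subset_if_flanks_avoided:
  assumes "is_arc n M" "is_arc n J"
    and "arc_vertices J \<inter> arc_vertices M \<noteq> {}"
    and "prev_vertex (fst M) \<notin> arc_vertices J" "snd M \<notin> arc_vertices J"
  shows "arc_vertices J \<subseteq> arc_vertices M"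
  using assms by (auto simp: arc_vertices_def prev_vertex_def is_arc_def split: if_splits)

lemma arc_source_mem: "is_arc n I \<Longrightarrow> fst I \<in> arc_vertices I"
  and arc_prev_source_not_mem: "is_arc n I \<Longrightarrow> prev_vertex (fst I) \<notin> arc_vertices I"
  and arc_sink_not_mem: "is_arc n I \<Longrightarrow> snd I \<notin> arc_vertices I"
  and arc_prev_sink_mem: "is_arc n I \<Longrightarrow> prev_vertex (snd I) \<in> arc_vertices I"
  using arc_source_iff[of I "fst I"] arc_sink_iff[of I "snd I"] by (auto simp: is_arc_def)

definition compatible :: "nat \<times> nat \<Rightarrow> nat \<times> nat \<Rightarrow> bool" where
  "compatible I J \<longleftrightarrow>
     (arc_vertices I \<inter> arc_vertices J \<noteq> {} \<and>
        (arc_vertices I \<subset> arc_vertices J \<or> arc_vertices J \<subset> arc_vertices I))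
   \<or> (arc_vertices I \<inter> arc_vertices J = {} \<and> snd I \<noteq> fst J \<and> snd J \<noteq> fst I)"

definition compatible_family :: "(nat \<times> nat) set \<Rightarrow> bool" where
  "compatible_family T \<longleftrightarrow> finite T \<and> (\<forall>I\<in>T. is_arc n I) \<and>
     (\<forall>I\<in>T. \<forall>J\<in>T. I \<noteq> J \<longrightarrow> compatible I J)"

lemma compatible_family_subset: "compatible_family T \<Longrightarrow> S \<subseteq> T \<Longrightarrow> compatible_family S"
  unfolding compatible_family_def by (meson finite_subset subsetD)

definition maximal_arc :: "(nat \<times> nat) set \<Rightarrow> nat \<times> nat \<Rightarrow> bool" where
  "maximal_arc T M \<longleftrightarrow> M \<in> T \<and> (\<forall>J\<in>T. card (arc_vertices J) \<le> card (arc_vertices M))"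

lemma maximal_arc_exists:
  assumes "finite T" "T \<noteq> {}"
  obtains M where "maximal_arc T M"
proof -
  have "Max ((\<lambda>J. card (arc_vertices J)) ` T) \<in> (\<lambda>J. card (arc_vertices J)) ` T"
    using assms by (intro Max_in) auto
  then obtain M where "M \<in> T" "card (arc_vertices M) = Max ((\<lambda>J. card (arc_vertices J)) ` T)"
    by (metis imageE)
  then have "maximal_arc T M" using assms(1) by (simp add: maximal_arc_def)
  then show thesis by (rule that)
qed

lemma maximal_arc_subset: "maximal_arc T M \<Longrightarrow> M \<in> S \<Longrightarrow> S \<subseteq> T \<Longrightarrow> maximal_arc S M"
  by (auto simp: maximal_arc_def)

lemma maximal_arc_not_properly_contained:
  assumes "maximal_arc T M" "J \<in> T"
  shows "\<not> arc_vertices M \<subset> arc_vertices J"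
proof
  assume "arc_vertices M \<subset> arc_vertices J"
  then have "card (arc_vertices M) < card (arc_vertices J)"
    by (intro psubset_card_mono) (simp add: arc_vertices_def)
  then show False using assms by (auto simp: maximal_arc_def)
qed

lemma maximal_arc_flanks_uncovered:
  assumes "compatible_family T" "maximal_arc T M" "J \<in> T"
  shows "snd M \<notin> arc_vertices J" "prev_vertex (fst M) \<notin> arc_vertices J"
proof -
  have M: "M \<in> T" "is_arc n M" and J: "is_arc n J"
    using assms by (auto simp: maximal_arc_def compatible_family_def)
  have "fst M < n" "snd M < n" using M(2) by (auto simp: is_arc_def)
  consider "arc_vertices J \<subseteq> arc_vertices M"
    | "arc_vertices M \<inter> arc_vertices J = {}" "snd M \<noteq> fst J" "snd J \<noteq> fst M"
  proof (cases "J = M")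
    case False
    then have "compatible M J" using assms(1,3) M(1) by (auto simp: compatible_family_def)
    then have "arc_vertices J \<subset> arc_vertices M \<or> (arc_vertices M \<inter> arc_vertices J = {} \<and>
        snd M \<noteq> fst J \<and> snd J \<noteq> fst M)"
      using maximal_arc_not_properly_contained[OF assms(2,3)] unfolding compatible_def by metis
    then show thesis using that psubset_imp_subset by metis
  qed (simp add: that(1))
  then have "snd M \<notin> arc_vertices J \<and> prev_vertex (fst M) \<notin> arc_vertices J"
  proof cases
    case 1
    then show ?thesis
      using arc_sink_not_mem[OF M(2)] arc_prev_source_not_mem[OF M(2)] by (meson subsetD)
  next
    case 2
    have "prev_vertex (snd M) \<notin> arc_vertices J" "fst M \<notin> arc_vertices J"
      using 2(1) arc_prev_sink_mem[OF M(2)] arc_source_mem[OF M(2)] by (auto simp: disjoint_iff)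
    then show ?thesis
      using 2(2,3) arc_source_iff[OF J \<open>snd M < n\<close>] arc_sink_iff[OF J \<open>fst M < n\<close>] by metis
  qed
  then show "snd M \<notin> arc_vertices J" "prev_vertex (fst M) \<notin> arc_vertices J" by auto
qed

lemma uncovered_vertex_exists:
  assumes "compatible_family S" "S \<noteq> {}"
    and "\<forall>I\<in>S. snd I \<in> X \<or> prev_vertex (fst I) \<in> X"
  shows "\<exists>k\<in>X. \<forall>J\<in>S. k \<notin> arc_vertices J"
proof -
  have "finite S" using assms(1) by (simp add: compatible_family_def)
  then obtain M where M: "maximal_arc S M" using assms(2) by (rule maximal_arc_exists)
  then have "M \<in> S" by (simp add: maximal_arc_def)
  then show ?thesis using assms(3) maximal_arc_flanks_uncovered[OF assms(1) M] by blast
qed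

lemma proper_subarcs_leave_vertex_uncovered:
  assumes "is_arc n M" "compatible_family S" "\<forall>I\<in>S. arc_vertices I \<subset> arc_vertices M"
  shows "\<exists>k\<in>arc_vertices M. \<forall>J\<in>S. k \<notin> arc_vertices J"
proof (cases "S = {}")
  case True
  then show ?thesis using arc_source_mem[OF assms(1)] by blast
next
  case False
  have "snd I \<in> arc_vertices M \<or> prev_vertex (fst I) \<in> arc_vertices M" if "I \<in> S" for I
  proof (rule ccontr)
    assume flanks: "\<not> ?thesis"
    have I: "is_arc n I" using that assms(2) by (simp add: compatible_family_def)
    then have "fst I \<in> arc_vertices I \<inter> arc_vertices M"
      using that assms(3) arc_source_mem by blast
    then have "arc_vertices M \<subseteq> arc_vertices I"
      using arc_vertices_subset_if_flanks_avoided[OF I assms(1)] flanks by blast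
    then show False using that assms(3) by blast
  qed
  then show ?thesis using uncovered_vertex_exists[OF assms(2) False] by blast
qed

definition coverage :: "(nat \<times> nat) set \<Rightarrow> (nat \<times> nat \<Rightarrow> real) \<Rightarrow> nat \<Rightarrow> real" where
  "coverage T w k = (\<Sum>J\<in>T. if k \<in> arc_vertices J then w J else 0)"

lemma coverage_nonneg: "(\<And>J. J \<in> T \<Longrightarrow> 0 \<le> w J) \<Longrightarrow> 0 \<le> coverage T w k"
  unfolding coverage_def by (intro sum_nonneg) auto

lemma coverage_ge:
  assumes "finite T" "\<And>J. J \<in> T \<Longrightarrow> 0 \<le> w J" "M \<in> T" "k \<in> arc_vertices M"
  shows "w M \<le> coverage T w k"
  unfolding coverage_def
  using member_le_sum[of M T "\<lambda>J. if k \<in> arc_vertices J then w J else 0"] assms by auto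

lemma coverage_eq_0_iff:
  assumes "finite T" "\<forall>J\<in>T. 0 < w J"
  shows "coverage T w k = 0 \<longleftrightarrow> (\<forall>J\<in>T. k \<notin> arc_vertices J)"
  unfolding coverage_def using assms
  by (subst sum_nonneg_eq_0_iff) (auto simp: less_imp_le dest: bspec)

lemma coverage_remove:
  assumes "finite T" "M \<in> T"
  shows "coverage T w k = (if k \<in> arc_vertices M then w M else 0) + coverage (T - {M}) w k"
  unfolding coverage_def using assms by (simp add: sum.remove)

lemma coverage_eq_single:
  assumes "finite T" "M \<in> T" "k \<in> arc_vertices M" "\<forall>J\<in>T - {M}. k \<notin> arc_vertices J"
  shows "coverage T w k = w M"
proof -
  have "coverage (T - {M}) w k = 0"
    unfolding coverage_def using assms(4) by (intro sum.neutral) auto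
  then show ?thesis using coverage_remove[OF assms(1,2)] assms(3) by simp
qed

lemma root_comb_eq_coverage_diff:
  assumes "\<forall>I\<in>T. is_arc n I" "k < n"
  shows "root_comb T w k = coverage T w k - coverage T w (prev_vertex k)"
proof -
  have "unit_vec (fst I) k - unit_vec (snd I) k =
      (if k \<in> arc_vertices I then 1 else 0) - (if prev_vertex k \<in> arc_vertices I then 1 else 0)"
    if "is_arc n I" for I
    using arc_source_iff[OF that assms(2)] arc_sink_iff[OF that assms(2)] that
    by (auto simp: unit_vec_def is_arc_def)
  then show ?thesis
    unfolding root_comb_def coverage_def using assms(1)
    by (auto simp: sum_subtractf[symmetric] intro!: sum.cong)
qed

lemma uncovered_vertex_exists_less:
  assumes "compatible_family S" "S \<noteq> {}"
  obtains k where "k < n" "\<forall>J\<in>S. k \<notin> arc_vertices J"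
proof -
  have "\<forall>I\<in>S. snd I \<in> {..<n} \<or> prev_vertex (fst I) \<in> {..<n}"
    using assms(1) by (auto simp: compatible_family_def is_arc_def)
  then obtain k where "k \<in> {..<n}" "\<forall>J\<in>S. k \<notin> arc_vertices J"
    using uncovered_vertex_exists[OF assms] by blast
  then show thesis using that by simp
qed

lemma coverage_eq_if_root_comb_eq:
  assumes "compatible_family T1" "T1 \<noteq> {}" "\<forall>I\<in>T1. 0 < a I"
    and "compatible_family T2" "T2 \<noteq> {}" "\<forall>I\<in>T2. 0 < b I"
    and "root_comb T1 a = root_comb T2 b" "k < n"
  shows "coverage T1 a k = coverage T2 b k"
proof -
  define D where "D k = coverage T1 a k - coverage T2 b k" for k
  have arcs: "\<forall>I\<in>T1. is_arc n I" "\<forall>I\<in>T2. is_arc n I" and fin: "finite T1" "finite T2"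
    using assms(1,4) by (auto simp: compatible_family_def)
  have "D k = D (prev_vertex k)" if "k < n" for k
    using root_comb_eq_coverage_diff[OF arcs(1) that, of a]
      root_comb_eq_coverage_diff[OF arcs(2) that, of b] fun_cong[OF assms(7), of k]
    unfolding D_def by linarith
  then have const: "D k = D 0" if "k < n" for k
    using prev_vertex_invariant_const[of D k] that by blast
  obtain k1 where k1: "k1 < n" "\<forall>J\<in>T1. k1 \<notin> arc_vertices J"
    using uncovered_vertex_exists_less[OF assms(1,2)] .
  obtain k2 where k2: "k2 < n" "\<forall>J\<in>T2. k2 \<notin> arc_vertices J"
    using uncovered_vertex_exists_less[OF assms(4,5)] .
  have "coverage T1 a k1 = 0" "coverage T2 b k2 = 0"
    using k1(2) k2(2) coverage_eq_0_iff[OF fin(1) assms(3)] coverage_eq_0_iff[OF fin(2) assms(6)]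
    by simp_all
  then have "D k1 \<le> 0" "D k2 \<ge> 0"
    using coverage_nonneg[of T2 b k1] coverage_nonneg[of T1 a k2] assms(3,6)
    unfolding D_def by (simp_all add: less_imp_le)
  then have "D k = 0" using const[OF k1(1)] const[OF k2(1)] const[OF assms(8)] by linarith
  then show ?thesis by (simp add: D_def)
qed

lemma maximal_arc_private_vertex:
  assumes "compatible_family T" "maximal_arc T M"
  obtains k where "k \<in> arc_vertices M" "\<forall>J\<in>T - {M}. k \<notin> arc_vertices J"
proof -
  define S where "S = {J \<in> T. J \<noteq> M \<and> arc_vertices J \<subseteq> arc_vertices M}"
  have M: "M \<in> T" "is_arc n M" using assms by (auto simp: maximal_arc_def compatible_family_def)
  have "compatible_family S"
    by (rule compatible_family_subset[OF assms(1)]) (auto simp: S_def)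
  moreover have "\<forall>J\<in>S. arc_vertices J \<subset> arc_vertices M"
  proof
    fix J assume "J \<in> S"
    then have J: "J \<in> T" "J \<noteq> M" "arc_vertices J \<subseteq> arc_vertices M" by (simp_all add: S_def)
    then have "is_arc n J" using assms(1) by (simp add: compatible_family_def)
    then show "arc_vertices J \<subset> arc_vertices M"
      unfolding psubset_eq using J(2,3) arc_vertices_inj[OF _ M(2)] by blast
  qed
  ultimately obtain k where k: "k \<in> arc_vertices M" "\<forall>J\<in>S. k \<notin> arc_vertices J"
    using proper_subarcs_leave_vertex_uncovered[OF M(2)] by blast
  have "\<forall>J\<in>T - {M}. k \<notin> arc_vertices J"
  proof (intro ballI notI)
    fix J assume J: "J \<in> T - {M}" and kJ: "k \<in> arc_vertices J"
    have "compatible J M" using assms(1) J M(1) by (auto simp: compatible_family_def)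
    moreover have "\<not> arc_vertices M \<subset> arc_vertices J"
      using maximal_arc_not_properly_contained[OF assms(2)] J by (meson DiffD1)
    moreover have "\<not> arc_vertices J \<subset> arc_vertices M"
    proof
      assume "arc_vertices J \<subset> arc_vertices M"
      then have "J \<in> S" using J unfolding S_def by auto
      then show False using k(2) kJ by blast
    qed
    ultimately show False using k(1) kJ unfolding compatible_def by (metis IntI empty_iff)
  qed
  then show thesis using that k(1) by blast
qed

lemma maximal_arc_mem_if_coverage_eq:
  assumes "compatible_family T1" "compatible_family T2" "\<forall>J\<in>T1. 0 < a J" "\<forall>J\<in>T2. 0 < b J"
    and "\<forall>k<n. coverage T1 a k = coverage T2 b k"
    and "maximal_arc (T1 \<union> T2) M" "M \<in> T1"
  shows "M \<in> T2"
proof (rule ccontr)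
  assume "M \<notin> T2"
  have fin: "finite T1" "finite T2" and M: "is_arc n M" and arcs: "\<forall>J\<in>T2. is_arc n J"
    using assms(1,2,7) by (auto simp: compatible_family_def)
  have flanks: "snd M < n" "prev_vertex (fst M) < n"
    using M prev_vertex_less by (auto simp: is_arc_def)
  have "maximal_arc T1 M" using maximal_arc_subset[OF assms(6,7)] by blast
  then have "coverage T1 a (snd M) = 0" "coverage T1 a (prev_vertex (fst M)) = 0"
    using maximal_arc_flanks_uncovered[OF assms(1)] coverage_eq_0_iff[OF fin(1) assms(3)]
    by simp_all
  then have "coverage T2 b (snd M) = 0" "coverage T2 b (prev_vertex (fst M)) = 0"
    using assms(5) flanks by simp_all
  then have flanks_T2: "snd M \<notin> arc_vertices J" "prev_vertex (fst M) \<notin> arc_vertices J"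
    if "J \<in> T2" for J
    using coverage_eq_0_iff[OF fin(2) assms(4)] that by simp_all
  define S where "S = {J \<in> T2. arc_vertices J \<inter> arc_vertices M \<noteq> {}}"
  have "compatible_family S"
    by (rule compatible_family_subset[OF assms(2)]) (auto simp: S_def)
  moreover have "\<forall>J\<in>S. arc_vertices J \<subset> arc_vertices M"
  proof
    fix J assume "J \<in> S"
    then have J: "J \<in> T2" "arc_vertices J \<inter> arc_vertices M \<noteq> {}" by (simp_all add: S_def)
    then have "is_arc n J" using arcs by blast
    then have "arc_vertices J \<subseteq> arc_vertices M"
      using arc_vertices_subset_if_flanks_avoided[OF M] J flanks_T2 by blast
    moreover have "J \<noteq> M" using J(1) \<open>M \<notin> T2\<close> by blast
    ultimately show "arc_vertices J \<subset> arc_vertices M"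
      unfolding psubset_eq using arc_vertices_inj[OF \<open>is_arc n J\<close> M] by blast
  qed
  ultimately obtain k where k: "k \<in> arc_vertices M" "\<forall>J\<in>S. k \<notin> arc_vertices J"
    using proper_subarcs_leave_vertex_uncovered[OF M] by blast
  have "k < n" using k(1) arc_vertices_subset[OF M] by blast
  have "\<forall>J\<in>T2. k \<notin> arc_vertices J"
  proof (intro ballI notI)
    fix J assume "J \<in> T2" "k \<in> arc_vertices J"
    then have "J \<in> S" using k(1) unfolding S_def by blast
    then show False using k(2) \<open>k \<in> arc_vertices J\<close> by blast
  qed
  then have "coverage T1 a k = 0"
    using coverage_eq_0_iff[OF fin(2) assms(4)] assms(5) \<open>k < n\<close> by simp
  moreover have "a M \<le> coverage T1 a k"
    using coverage_ge[OF fin(1) _ assms(7) k(1)] assms(3) by (simp add: less_imp_le)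
  ultimately show False using assms(3,7) by fastforce
qed

lemma maximal_arc_weight_eq_if_coverage_eq:
  assumes "compatible_family T1" "compatible_family T2" "\<forall>J\<in>T1. 0 \<le> a J" "\<forall>J\<in>T2. 0 \<le> b J"
    and "\<forall>k<n. coverage T1 a k = coverage T2 b k"
    and "maximal_arc T1 M" "maximal_arc T2 M"
  shows "a M = b M"
proof -
  have fin: "finite T1" "finite T2" and M: "M \<in> T1" "M \<in> T2" "is_arc n M"
    using assms(1,2,6,7) by (auto simp: compatible_family_def maximal_arc_def)
  have less_n: "k < n" if "k \<in> arc_vertices M" for k
    using that arc_vertices_subset[OF M(3)] by blast
  obtain k1 where k1: "k1 \<in> arc_vertices M" "\<forall>J\<in>T1 - {M}. k1 \<notin> arc_vertices J"
    using maximal_arc_private_vertex[OF assms(1,6)] .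
  obtain k2 where k2: "k2 \<in> arc_vertices M" "\<forall>J\<in>T2 - {M}. k2 \<notin> arc_vertices J"
    using maximal_arc_private_vertex[OF assms(2,7)] .
  have "b M \<le> coverage T2 b k1" using coverage_ge[OF fin(2) _ M(2) k1(1)] assms(4) by simp
  also have "\<dots> = coverage T1 a k1" using assms(5) less_n[OF k1(1)] by simp
  also have "\<dots> = a M" using coverage_eq_single[OF fin(1) M(1) k1] .
  finally have "b M \<le> a M" .
  have "a M \<le> coverage T1 a k2" using coverage_ge[OF fin(1) _ M(1) k2(1)] assms(3) by simp
  also have "\<dots> = coverage T2 b k2" using assms(5) less_n[OF k2(1)] by simp
  also have "\<dots> = b M" using coverage_eq_single[OF fin(2) M(2) k2] .
  finally show ?thesis using \<open>b M \<le> a M\<close> by simp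
qed

theorem compatible_family_eq_if_coverage_eq:
  assumes "compatible_family T1" "compatible_family T2" "\<forall>J\<in>T1. 0 < a J" "\<forall>J\<in>T2. 0 < b J"
    and "\<forall>k<n. coverage T1 a k = coverage T2 b k"
  shows "T1 = T2 \<and> (\<forall>I\<in>T1. a I = b I)"
  using assms
proof (induction "card T1 + card T2" arbitrary: T1 T2 rule: less_induct)
  case less
  have fin: "finite T1" "finite T2" using less.prems(1,2) by (simp_all add: compatible_family_def)
  show ?case
  proof (cases "T1 \<union> T2 = {}")
    case False
    have "finite (T1 \<union> T2)" using fin by simp
    then obtain M where M: "maximal_arc (T1 \<union> T2) M" using False by (rule maximal_arc_exists)
    have "M \<in> T1 \<and> M \<in> T2"
    proof (cases "M \<in> T1")
      case True
      then show ?thesis using maximal_arc_mem_if_coverage_eq[OF less.prems M] by blast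
    next
      case False
      then have "M \<in> T2" using M by (simp add: maximal_arc_def)
      moreover have "maximal_arc (T2 \<union> T1) M" using M by (simp add: Un_commute)
      ultimately show ?thesis
        using maximal_arc_mem_if_coverage_eq[OF less.prems(2,1,4,3)] less.prems(5) by simp
    qed
    then have M12: "M \<in> T1" "M \<in> T2" "a M = b M"
      using maximal_arc_weight_eq_if_coverage_eq[OF less.prems(1,2) _ _ less.prems(5)]
        maximal_arc_subset[OF M] less.prems(3,4) by (auto simp: less_imp_le)
    have card: "card (T1 - {M}) + card (T2 - {M}) < card T1 + card T2"
      using fin M12 card_gt_0_iff[of T1] card_gt_0_iff[of T2] by fastforce
    have fam: "compatible_family (T1 - {M})" "compatible_family (T2 - {M})"
      using compatible_family_subset[OF less.prems(1)] compatible_family_subset[OF less.prems(2)]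
      by simp_all
    have pos: "\<forall>J\<in>T1 - {M}. 0 < a J" "\<forall>J\<in>T2 - {M}. 0 < b J"
      using less.prems(3,4) by simp_all
    have cov: "\<forall>k<n. coverage (T1 - {M}) a k = coverage (T2 - {M}) b k"
    proof (intro allI impI)
      fix k assume "k < n"
      then show "coverage (T1 - {M}) a k = coverage (T2 - {M}) b k"
        using less.prems(5) coverage_remove[OF fin(1) M12(1), of a k]
          coverage_remove[OF fin(2) M12(2), of b k] M12(3) by (simp split: if_splits)
    qed
    have IH: "T1 - {M} = T2 - {M}" "\<forall>I\<in>T1 - {M}. a I = b I"
      using less.hyps[OF card fam pos cov] by simp_all
    have "T1 = T2" using IH(1) M12(1,2) by (metis insert_Diff)
    moreover have "\<forall>I\<in>T1. a I = b I" using IH(2) M12(3) by auto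
    ultimately show ?thesis ..
  qed simp
qed

lemma circ_mod_eq:
  assumes "- real n \<le> y" "y < real n"
  shows "circ_mod n y = (if 0 \<le> y then y else y + real n)"
proof -
  have "\<lfloor>y / real n\<rfloor> = (if 0 \<le> y then 0 else -1)"
    using assms by (simp add: floor_eq_iff field_simps)
  then show ?thesis by (simp add: circ_mod_def)
qed

text \<open>A real arc is the union of the cells [k, k+1) of its vertices k, so compatibility of
  arcs can be decided on their vertex sets.\<close>

definition unit_cells :: "nat set \<Rightarrow> real set" where
  "unit_cells A = {z. 0 \<le> z \<and> z < real n \<and> nat \<lfloor>z\<rfloor> \<in> A}"

lemma arc_set_eq_unit_cells:
  assumes "is_arc n I"
  shows "arc_set n I = unit_cells (arc_vertices I)"
proof -
  obtain a b where I: "I = (a, b)" "a < n" "b < n" "a \<noteq> b"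
    using assms by (cases I) (auto simp: is_arc_def)
  have "z \<in> arc_set n I \<longleftrightarrow> nat \<lfloor>z\<rfloor> \<in> arc_vertices I"
    if z: "0 \<le> z" "z < real n" for z
  proof -
    have floor_le: "real m \<le> z \<longleftrightarrow> m \<le> nat \<lfloor>z\<rfloor>" and floor_less: "z < real m \<longleftrightarrow> nat \<lfloor>z\<rfloor> < m"
      for m using z(1) by (auto simp: le_nat_iff le_floor_iff nat_less_iff floor_less_iff)
    have "circ_mod n (z - real a) = (if real a \<le> z then z - real a else z - real a + real n)"
      "circ_mod n (real b - real a) = (if a < b then real b - real a else real b - real a + real n)"
      using circ_mod_eq I z by auto
    then have "z \<in> arc_set n I \<longleftrightarrow>
        (if a < b then real a \<le> z \<and> z < real b else real a \<le> z \<or> z < real b)"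
      using I z by (auto simp: arc_set_def)
    also have "\<dots> \<longleftrightarrow> nat \<lfloor>z\<rfloor> \<in> arc_vertices I"
      using I floor_less[of n] z by (simp add: floor_le floor_less arc_vertices_def)
    finally show ?thesis .
  qed
  then show ?thesis by (auto simp: arc_set_def unit_cells_def)
qed

lemma unit_cells_subset_iff: "A \<subseteq> {..<n} \<Longrightarrow> unit_cells A \<subseteq> unit_cells B \<longleftrightarrow> A \<subseteq> B"
proof
  assume A: "A \<subseteq> {..<n}" and AB: "unit_cells A \<subseteq> unit_cells B"
  show "A \<subseteq> B"
  proof
    fix k assume "k \<in> A"
    then have "real k \<in> unit_cells A" using A by (auto simp: unit_cells_def)
    then have "real k \<in> unit_cells B" using AB by blast
    then show "k \<in> B" by (simp add: unit_cells_def)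
  qed
qed (auto simp: unit_cells_def)

lemma unit_cells_Int: "unit_cells A \<inter> unit_cells B = unit_cells (A \<inter> B)"
  by (auto simp: unit_cells_def)

lemma unit_cells_eq_empty_iff: "A \<subseteq> {..<n} \<Longrightarrow> unit_cells A = {} \<longleftrightarrow> A = {}"
  using unit_cells_subset_iff[of A "{}"] by (auto simp: unit_cells_def)

lemma compatible_arcs_iff_compatible:
  assumes "is_arc n I" "is_arc n J"
  shows "compatible_arcs n I J \<longleftrightarrow> compatible I J"
proof -
  have sub: "arc_vertices I \<subseteq> {..<n}" "arc_vertices J \<subseteq> {..<n}"
    using arc_vertices_subset assms by blast+
  then have sub_Int: "arc_vertices I \<inter> arc_vertices J \<subseteq> {..<n}" by blast
  show ?thesis
    unfolding compatible_arcs_def compatible_def less_le_not_le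
      arc_set_eq_unit_cells[OF assms(1)] arc_set_eq_unit_cells[OF assms(2)] unit_cells_Int
      unit_cells_eq_empty_iff[OF sub_Int]
      unit_cells_subset_iff[OF sub(1)] unit_cells_subset_iff[OF sub(2)] by (rule refl)
qed

lemma admissible_iff: "admissible n T \<longleftrightarrow> compatible_family T \<and> T \<noteq> {}"
  unfolding admissible_def compatible_family_def
  using compatible_arcs_iff_compatible by blast

end

theorem mainTheorem6:
  fixes n :: nat and T1 T2 :: "(nat \<times> nat) set" and \<alpha> \<beta> :: "nat \<times> nat \<Rightarrow> real"
  assumes "n \<ge> 3"
    and "admissible n T1" and "admissible n T2"
    and "\<forall>I\<in>T1. \<alpha> I > 0" and "\<forall>I\<in>T2. \<beta> I > 0"
    and "(\<Sum>I\<in>T1. \<alpha> I) = 1" and "(\<Sum>I\<in>T2. \<beta> I) = 1"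
    and "root_comb T1 \<alpha> = root_comb T2 \<beta>"
  shows "T1 = T2 \<and> (\<forall>I\<in>T1. \<alpha> I = \<beta> I)"
proof -
  have T1: "compatible_family n T1" "T1 \<noteq> {}" and T2: "compatible_family n T2" "T2 \<noteq> {}"
    using assms(2,3) by (simp_all add: admissible_iff)
  have "\<forall>k<n. coverage n T1 \<alpha> k = coverage n T2 \<beta> k"
    using coverage_eq_if_root_comb_eq[OF T1 assms(4) T2 assms(5,8)] by blast
  then show ?thesis by (rule compatible_family_eq_if_coverage_eq[OF T1(1) T2(1) assms(4,5)])
qed

end
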